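(* Let $N\ge 2$ and $0<\gamma_1\le\gamma_2\le\dots\le\gamma_N$ with $\gamma_i+\frac{\gamma_i}{\gamma_i+\gamma_j}\ge 1$ for all distinct $i,j$. Among all spanning trees $T$ on $\{1,\dots,N\}$, the star $S$ centered at vertex $1$ (edges $\{1,j\}$ for $j=2,\dots,N$) maximizes $R_{\mathrm s}(T)$, and $$R_{\mathrm s}(S)=\frac{1}{2(N-1)}\log_2\!\Big(\Big(\gamma_1+\frac{\gamma_1}{\gamma_1+\gamma_N}\Big)\prod_{i=2}^{N}\Big(\gamma_i+\frac{\gamma_i}{\gamma_i+\gamma_1}\Big)\Big).$$
   Context: For distinct $i,j$ put $\varphi(i,j)=\log_2\!\big(\gamma_i+\frac{\gamma_i}{\gamma_i+\gamma_j}\big)$. For a spanning tree $T$ on $\{1,\dots,N\}$ with neighbor sets $A_i^T$, define the sum rate $$R_{\mathrm s}(T)=\frac{1}{2(N-1)}\sum_{i=1}^N \min_{j\in A_i^T}\varphi(i,j).$$ A spanning tree is called sum-rate optimal if it maximizes $R_{\mathrm s}$ over all spanning trees on $\{1,\dots,N\}$. *)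

theory Defs
  imports Complex_Main
begin

definition edges_on :: "nat \<Rightarrow> nat set set" where
  "edges_on N = {e. \<exists>i j. e = {i, j} \<and> i \<noteq> j \<and> i \<in> {1..N} \<and> j \<in> {1..N}}"

definition adj_rel :: "nat set set \<Rightarrow> (nat \<times> nat) set" where
  "adj_rel T = {(i, j). {i, j} \<in> T \<and> i \<noteq> j}"

definition is_spanning_tree :: "nat \<Rightarrow> nat set set \<Rightarrow> bool" where
  "is_spanning_tree N T \<longleftrightarrow> T \<subseteq> edges_on N \<and> card T = N - 1 \<and>
     (\<forall>i\<in>{1..N}. \<forall>j\<in>{1..N}. (i, j) \<in> (adj_rel T)\<^sup>*)"

definition nbrs :: "nat set set \<Rightarrow> nat \<Rightarrow> nat set" where
  "nbrs T i = {j. j \<noteq> i \<and> {i, j} \<in> T}"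

definition phi :: "(nat \<Rightarrow> real) \<Rightarrow> nat \<Rightarrow> nat \<Rightarrow> real" where
  "phi \<gamma> i j = log 2 (\<gamma> i + \<gamma> i / (\<gamma> i + \<gamma> j))"

definition sum_rate :: "(nat \<Rightarrow> real) \<Rightarrow> nat \<Rightarrow> nat set set \<Rightarrow> real" where
  "sum_rate \<gamma> N T = 1 / (2 * (real N - 1)) *
     (\<Sum>i\<in>{1..N}. Min ((\<lambda>j. phi \<gamma> i j) ` nbrs T i))"

definition star1 :: "nat \<Rightarrow> nat set set" where
  "star1 N = {{1, j} | j. j \<in> {2..N}}"

end

theory Submission
  imports Defs "HOL-Library.Transitive_Closure_Table"
begin

text \<open>
  For a spanning tree \<open>T\<close> let \<open>t v\<close> be the minimum of \<open>\<phi>(v,j)\<close> over the neighbours \<open>j\<close> of \<open>v\<close>.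
  As \<open>\<gamma>\<^sub>1\<close> is smallest and \<open>\<phi>(v,j)\<close> decreases in \<open>\<gamma>\<^sub>j\<close>, every \<open>v \<noteq> 1\<close> has \<open>t v \<le> \<phi>(v,1)\<close>, its
  value in the star. Along the path \<open>1 = v\<^sub>0, \<dots>, v\<^sub>k = N\<close> in \<open>T\<close> the better bound
  \<open>t v\<^sub>i \<le> \<phi>(v\<^sub>i, v\<^sub>i\<^sub>+\<^sub>1)\<close> holds, and the exchange inequality
  \<open>\<phi>(1,a) + \<phi>(a,b) \<le> \<phi>(1,b) + \<phi>(a,1)\<close> telescopes the sum of these bounds to
  \<open>\<phi>(1,N) + \<Sum>\<^sub>i\<^sub>\<ge>\<^sub>1 \<phi>(v\<^sub>i,1)\<close>, where \<open>\<phi>(1,N)\<close> is the value of the centre of the star.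
\<close>

fun path_weight :: "('a \<Rightarrow> 'a \<Rightarrow> real) \<Rightarrow> 'a \<Rightarrow> 'a list \<Rightarrow> real" where
  "path_weight w x [] = 0"
| "path_weight w x (y # ys) = w x y + path_weight w y ys"

lemma path_weight_snoc:
  "path_weight w x (ys @ [z]) = path_weight w x ys + w (last (x # ys)) z"
  by (induction ys arbitrary: x) auto

lemma sum_list_le_path_weight:
  assumes "rtrancl_path r x ys z" and "\<And>a b. r a b \<Longrightarrow> t a \<le> w a b"
  shows "sum_list (map t (butlast (x # ys))) \<le> path_weight w x ys"
  using assms(1)
proof (induction rule: rtrancl_path.induct)
  case (step x y ys z)
  then show ?case using assms(2)[of x y] by (cases ys) auto
qed simp

lemma path_weight_exchange_le:
  assumes "set ws \<subseteq> S" and "z \<in> S"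
    and exchange: "\<And>a b. a \<in> S \<Longrightarrow> b \<in> S \<Longrightarrow> w c a + w a b \<le> w c b + w a c"
  shows "path_weight w c (ws @ [z]) \<le> w c z + sum_list (map (\<lambda>v. w v c) ws)"
  using assms(1,2)
proof (induction ws arbitrary: z rule: rev_induct)
  case (snoc a ws)
  have "path_weight w c ((ws @ [a]) @ [z]) = path_weight w c (ws @ [a]) + w a z"
    using path_weight_snoc[of w c "ws @ [a]" z] by simp
  also have "\<dots> \<le> w c a + sum_list (map (\<lambda>v. w v c) ws) + w a z"
    using snoc by simp
  also have "\<dots> \<le> w c z + sum_list (map (\<lambda>v. w v c) (ws @ [a]))"
    using exchange[of a z] snoc.prems by simp
  finally show ?case by simp
qed simp

lemma mem_nbrs_iff_adj_rel: "j \<in> nbrs T i \<longleftrightarrow> (i, j) \<in> adj_rel T"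
  unfolding nbrs_def adj_rel_def by auto

lemma nbrs_subset_vertices:
  assumes "T \<subseteq> edges_on N"
  shows "nbrs T i \<subseteq> {1..N}"
proof
  fix j assume "j \<in> nbrs T i"
  then have "{i, j} \<in> edges_on N" using assms unfolding nbrs_def by auto
  then show "j \<in> {1..N}" unfolding edges_on_def by (auto simp: doubleton_eq_iff)
qed

lemma spanning_tree_nbrs_nonempty:
  assumes "is_spanning_tree N T" and "i \<in> {1..N}" "j \<in> {1..N}" "i \<noteq> j"
  shows "nbrs T i \<noteq> {}"
proof -
  have "(i, j) \<in> (adj_rel T)\<^sup>*" using assms unfolding is_spanning_tree_def by blast
  then obtain k where "(i, k) \<in> adj_rel T"
    using \<open>i \<noteq> j\<close> by (cases rule: converse_rtranclE) auto
  then show ?thesis by (auto simp: mem_nbrs_iff_adj_rel)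
qed

lemma spanning_tree_distinct_path:
  assumes "is_spanning_tree N T" and "i \<in> {1..N}" "j \<in> {1..N}" "i \<noteq> j"
  obtains ws where "rtrancl_path (\<lambda>a b. (a, b) \<in> adj_rel T) i (ws @ [j]) j"
    and "distinct (i # ws @ [j])" and "set ws \<subseteq> {1..N}"
proof -
  let ?r = "\<lambda>a b. (a, b) \<in> adj_rel T"
  have "?r\<^sup>*\<^sup>* i j"
    using assms unfolding is_spanning_tree_def by (simp add: rtranclp_rtrancl_eq)
  then obtain ys0 where "rtrancl_path ?r i ys0 j"
    by (auto simp: rtranclp_eq_rtrancl_path)
  then obtain ys where path: "rtrancl_path ?r i ys j" and dist: "distinct (i # ys)"
    by (rule rtrancl_path_distinct)
  have "ys \<noteq> []" using path \<open>i \<noteq> j\<close> by (cases rule: rtrancl_path.cases) auto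
  then have ys: "ys = butlast ys @ [j]"
    using rtrancl_path_last[OF path] by (metis append_butlast_last_id)
  have "\<forall>v \<in> set ys. \<exists>u. ?r u v"
    using path by (induction rule: rtrancl_path.induct) auto
  then have "set ys \<subseteq> {1..N}"
    using nbrs_subset_vertices[of T N] assms(1)
    by (auto simp: is_spanning_tree_def simp flip: mem_nbrs_iff_adj_rel)
  then show thesis
    using that[of "butlast ys"] path dist ys by (metis set_append le_sup_iff)
qed

lemma spanning_tree_finite_nbrs: "is_spanning_tree N T \<Longrightarrow> finite (nbrs T i)"
  unfolding is_spanning_tree_def using nbrs_subset_vertices by (meson finite_atLeastAtMost finite_subset)

lemma spanning_tree_Min_nbrs_le:
  assumes "is_spanning_tree N T" "i \<in> {1..N}" "j \<in> {1..N}" "i \<noteq> j"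
    and "\<And>k. k \<in> {1..N} \<Longrightarrow> w i k \<le> c"
  shows "Min (w i ` nbrs T i) \<le> c"
proof -
  obtain k where k: "k \<in> nbrs T i" using spanning_tree_nbrs_nonempty[OF assms(1-4)] by blast
  then have "k \<in> {1..N}"
    using assms(1) nbrs_subset_vertices unfolding is_spanning_tree_def by blast
  moreover have "Min (w i ` nbrs T i) \<le> w i k"
    using k spanning_tree_finite_nbrs[OF assms(1)] by simp
  ultimately show ?thesis using assms(5) by (meson order_trans)
qed

lemma star1_spanning_tree: "is_spanning_tree N (star1 N)"
proof -
  have star1_image: "star1 N = (\<lambda>j. {1, j}) ` {2..N}" unfolding star1_def by auto
  have "star1 N \<subseteq> edges_on N"
    unfolding star1_image edges_on_def by force
  moreover have "card (star1 N) = N - 1"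
    unfolding star1_image by (subst card_image) (auto simp: inj_on_def doubleton_eq_iff)
  moreover have hub: "(1, i) \<in> (adj_rel (star1 N))\<^sup>* \<and> (i, 1) \<in> (adj_rel (star1 N))\<^sup>*"
    if "i \<in> {1..N}" for i
  proof (cases "i = 1")
    case False
    then have "(1, i) \<in> adj_rel (star1 N) \<and> (i, 1) \<in> adj_rel (star1 N)"
      using that unfolding adj_rel_def star1_image by (auto simp: insert_commute)
    then show ?thesis by auto
  qed auto
  then have "(i, j) \<in> (adj_rel (star1 N))\<^sup>*" if "i \<in> {1..N}" "j \<in> {1..N}" for i j
    using hub[OF that(1)] hub[OF that(2)] by (blast intro: rtrancl_trans)
  ultimately show ?thesis unfolding is_spanning_tree_def by blast
qed

lemma nbrs_star1_centre: "nbrs (star1 N) 1 = {2..N}"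
  unfolding nbrs_def star1_def by (auto simp: doubleton_eq_iff)

lemma nbrs_star1_leaf: "i \<in> {2..N} \<Longrightarrow> nbrs (star1 N) i = {1}"
  unfolding nbrs_def star1_def by (auto simp: doubleton_eq_iff)

definition min_nbr_sum :: "(nat \<Rightarrow> nat \<Rightarrow> real) \<Rightarrow> nat \<Rightarrow> nat set set \<Rightarrow> real" where
  "min_nbr_sum w N T = (\<Sum>i\<in>{1..N}. Min (w i ` nbrs T i))"

lemma sum_rate_eq_min_nbr_sum: "sum_rate \<gamma> N T = 1 / (2 * (real N - 1)) * min_nbr_sum (phi \<gamma>) N T"
  unfolding sum_rate_def min_nbr_sum_def by simp

lemma min_nbr_sum_star1:
  assumes "N \<ge> 2" and "\<And>j. j \<in> {2..N} \<Longrightarrow> w 1 N \<le> w 1 j"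
  shows "min_nbr_sum w N (star1 N) = w 1 N + (\<Sum>i\<in>{2..N}. w i 1)"
proof -
  have "{1..N} = insert 1 {2..N}" using assms(1) by auto
  then have "min_nbr_sum w N (star1 N)
      = Min (w 1 ` nbrs (star1 N) 1) + (\<Sum>i\<in>{2..N}. Min (w i ` nbrs (star1 N) i))"
    unfolding min_nbr_sum_def by simp
  moreover have "Min (w 1 ` nbrs (star1 N) 1) = w 1 N"
    unfolding nbrs_star1_centre using assms by (intro Min_eqI) auto
  ultimately show ?thesis by (simp add: nbrs_star1_leaf)
qed

lemma min_nbr_sum_le_star_value:
  assumes "N \<ge> 2" and T: "is_spanning_tree N T"
    and best: "\<And>v j. v \<in> {2..N} \<Longrightarrow> j \<in> {1..N} \<Longrightarrow> w v j \<le> w v 1"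
    and exchange: "\<And>a b. a \<in> {1..N} \<Longrightarrow> b \<in> {1..N} \<Longrightarrow> w 1 a + w a b \<le> w 1 b + w a 1"
  shows "min_nbr_sum w N T \<le> w 1 N + (\<Sum>i\<in>{2..N}. w i 1)"
proof -
  define t where "t v = Min (w v ` nbrs T v)" for v
  have t_le_nbr: "t a \<le> w a b" if "(a, b) \<in> adj_rel T" for a b
    unfolding t_def using that spanning_tree_finite_nbrs[OF T] by (simp add: mem_nbrs_iff_adj_rel)
  have t_le_star: "t v \<le> w v 1" if "v \<in> {2..N}" for v
    unfolding t_def using that best assms(1)
    by (intro spanning_tree_Min_nbrs_le[OF T, of v 1]) auto
  obtain ws where path: "rtrancl_path (\<lambda>a b. (a, b) \<in> adj_rel T) 1 (ws @ [N]) N"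
    and dist: "distinct (1 # ws @ [N])" and ws: "set ws \<subseteq> {1..N}"
    using spanning_tree_distinct_path[OF T, of 1 N] assms(1) by auto
  define R where "R = {2..N} - set ws"
  have "1 \<notin> set ws" using dist by simp
  have "set ws \<subseteq> {2..N}"
  proof
    fix v assume "v \<in> set ws"
    then have "v \<in> {1..N}" "v \<noteq> 1" using ws \<open>1 \<notin> set ws\<close> by blast+
    then show "v \<in> {2..N}" by simp
  qed
  then have ws_R: "{2..N} = set ws \<union> R" "set ws \<inter> R = {}" "finite R"
    unfolding R_def by auto
  have "t 1 + (\<Sum>v\<in>set ws. t v) = sum_list (map t (butlast (1 # ws @ [N])))"
    using dist by (simp add: sum_list_distinct_conv_sum_set)
  also have "\<dots> \<le> path_weight w 1 (ws @ [N])"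
    using sum_list_le_path_weight[OF path] t_le_nbr by blast
  also have "\<dots> \<le> w 1 N + sum_list (map (\<lambda>v. w v 1) ws)"
    using path_weight_exchange_le[of ws "{1..N}" N w 1] ws exchange assms(1) by simp
  also have "\<dots> = w 1 N + (\<Sum>v\<in>set ws. w v 1)"
    using dist by (simp add: sum_list_distinct_conv_sum_set)
  finally have on_path: "t 1 + (\<Sum>v\<in>set ws. t v) \<le> w 1 N + (\<Sum>v\<in>set ws. w v 1)" .
  have off_path: "(\<Sum>v\<in>R. t v) \<le> (\<Sum>v\<in>R. w v 1)"
    using t_le_star by (intro sum_mono) (auto simp: R_def)
  have "{1..N} = insert 1 {2..N}" using assms(1) by auto
  then have "min_nbr_sum w N T = t 1 + (\<Sum>v\<in>{2..N}. t v)"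
    unfolding min_nbr_sum_def t_def by simp
  also have "\<dots> = t 1 + (\<Sum>v\<in>set ws. t v) + (\<Sum>v\<in>R. t v)"
    using ws_R by (simp add: sum.union_disjoint)
  also have "\<dots> \<le> w 1 N + (\<Sum>v\<in>set ws. w v 1) + (\<Sum>v\<in>R. w v 1)"
    using on_path off_path by linarith
  also have "\<dots> = w 1 N + (\<Sum>v\<in>{2..N}. w v 1)"
    using ws_R by (simp add: sum.union_disjoint)
  finally show ?thesis .
qed

lemma step_mono_on_ivl:
  fixes f :: "nat \<Rightarrow> 'a :: preorder"
  assumes "\<And>k. m \<le> k \<Longrightarrow> k < n \<Longrightarrow> f k \<le> f (k + 1)" and "m \<le> i" "i \<le> j" "j \<le> n"
  shows "f i \<le> f j"
  using \<open>i \<le> j\<close> \<open>j \<le> n\<close>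
proof (induction j rule: dec_induct)
  case (step k)
  then show ?case using assms(1)[of k] \<open>m \<le> i\<close> by (auto intro: order_trans)
qed simp

lemma rate_factor_eq: "x + x / (x + y) = x * (1 + 1 / (x + y :: real))"
  by (simp add: distrib_left)

lemma rate_factor_exchange:
  fixes a b c :: real
  assumes "0 < a" "a \<le> b" "a \<le> c"
  shows "(a + a/(a+b)) * (b + b/(b+c)) \<le> (a + a/(a+c)) * (b + b/(b+a))"
proof -
  have "1/(b+c) \<le> 1/(a+c)" using assms by (simp add: frac_le)
  moreover have "0 \<le> a * b * (1 + 1/(a+b))" using assms by simp
  ultimately have "a * b * (1 + 1/(a+b)) * (1 + 1/(b+c)) \<le> a * b * (1 + 1/(a+b)) * (1 + 1/(a+c))"
    by (intro mult_left_mono) auto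
  then show ?thesis
    unfolding rate_factor_eq by (simp add: ac_simps)
qed

lemma rate_factor_pos: "0 < x \<Longrightarrow> 0 < y \<Longrightarrow> 0 < x + x / (x + y :: real)"
  by (simp add: add_pos_pos)

lemma phi_antimono:
  assumes "0 < \<gamma> i" "0 < \<gamma> j" "\<gamma> j \<le> \<gamma> k"
  shows "phi \<gamma> i k \<le> phi \<gamma> i j"
proof -
  have "\<gamma> i / (\<gamma> i + \<gamma> k) \<le> \<gamma> i / (\<gamma> i + \<gamma> j)"
    using assms by (intro divide_left_mono) auto
  moreover have "0 < \<gamma> i + \<gamma> i / (\<gamma> i + \<gamma> k)"
    using assms by (intro rate_factor_pos) auto
  ultimately show ?thesis
    unfolding phi_def by (intro log_mono) auto
qed

lemma phi_exchange:
  assumes "0 < \<gamma> c" "\<gamma> c \<le> \<gamma> a" "\<gamma> c \<le> \<gamma> b"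
  shows "phi \<gamma> c a + phi \<gamma> a b \<le> phi \<gamma> c b + phi \<gamma> a c"
proof -
  have pos: "0 < \<gamma> a" "0 < \<gamma> b" using assms by auto
  have "phi \<gamma> c a + phi \<gamma> a b = log 2 ((\<gamma> c + \<gamma> c / (\<gamma> c + \<gamma> a)) * (\<gamma> a + \<gamma> a / (\<gamma> a + \<gamma> b)))"
    unfolding phi_def using assms(1) pos by (simp add: log_mult_pos rate_factor_pos)
  also have "\<dots> \<le> log 2 ((\<gamma> c + \<gamma> c / (\<gamma> c + \<gamma> b)) * (\<gamma> a + \<gamma> a / (\<gamma> a + \<gamma> c)))"
    using rate_factor_exchange[OF assms] assms(1) pos by (simp add: rate_factor_pos)
  also have "\<dots> = phi \<gamma> c b + phi \<gamma> a c"
    unfolding phi_def using assms(1) pos by (simp add: log_mult_pos rate_factor_pos)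
  finally show ?thesis .
qed

lemma sum_phi_eq_log_prod:
  assumes "finite I" and "\<And>i. i \<in> I \<Longrightarrow> 0 < \<gamma> i" and "0 < \<gamma> c"
  shows "(\<Sum>i\<in>I. phi \<gamma> i c) = log 2 (\<Prod>i\<in>I. \<gamma> i + \<gamma> i / (\<gamma> i + \<gamma> c))"
proof -
  have "\<gamma> i + \<gamma> i / (\<gamma> i + \<gamma> c) \<noteq> 0" if "i \<in> I" for i
    using rate_factor_pos[OF assms(2)[OF that] assms(3)] by linarith
  then have "ln (\<Prod>i\<in>I. \<gamma> i + \<gamma> i / (\<gamma> i + \<gamma> c)) = (\<Sum>i\<in>I. ln (\<gamma> i + \<gamma> i / (\<gamma> i + \<gamma> c)))"
    by (rule ln_prod[OF assms(1)])
  then show ?thesis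
    unfolding phi_def log_def by (simp only: sum_divide_distrib)
qed

lemma phi_add_sum_phi_eq_log_prod:
  assumes "finite I" and "\<And>i. i \<in> I \<Longrightarrow> 0 < \<gamma> i" and "0 < \<gamma> c" "0 < \<gamma> d"
  shows "phi \<gamma> c d + (\<Sum>i\<in>I. phi \<gamma> i c)
    = log 2 ((\<gamma> c + \<gamma> c / (\<gamma> c + \<gamma> d)) * (\<Prod>i\<in>I. \<gamma> i + \<gamma> i / (\<gamma> i + \<gamma> c)))"
proof -
  have "0 < (\<Prod>i\<in>I. \<gamma> i + \<gamma> i / (\<gamma> i + \<gamma> c))"
    using assms by (intro prod_pos rate_factor_pos) auto
  then show ?thesis
    using sum_phi_eq_log_prod[of I \<gamma> c] assms log_mult_pos[OF rate_factor_pos[OF assms(3,4)]]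
    unfolding phi_def[of \<gamma> c d] by simp
qed

theorem theorem3:
  fixes N :: nat and \<gamma> :: "nat \<Rightarrow> real"
  assumes "N \<ge> 2"
    and "0 < \<gamma> 1"
    and "\<And>i. 1 \<le> i \<Longrightarrow> i < N \<Longrightarrow> \<gamma> i \<le> \<gamma> (i + 1)"
    and "\<And>i j. i \<in> {1..N} \<Longrightarrow> j \<in> {1..N} \<Longrightarrow> i \<noteq> j \<Longrightarrow>
           \<gamma> i + \<gamma> i / (\<gamma> i + \<gamma> j) \<ge> 1"
  shows "is_spanning_tree N (star1 N)
    \<and> (\<forall>T. is_spanning_tree N T \<longrightarrow> sum_rate \<gamma> N T \<le> sum_rate \<gamma> N (star1 N))
    \<and> sum_rate \<gamma> N (star1 N) = 1 / (2 * (real N - 1)) *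
        log 2 ((\<gamma> 1 + \<gamma> 1 / (\<gamma> 1 + \<gamma> N)) *
               (\<Prod>i\<in>{2..N}. \<gamma> i + \<gamma> i / (\<gamma> i + \<gamma> 1)))"
proof -
  have mono: "\<gamma> i \<le> \<gamma> j" if "1 \<le> i" "i \<le> j" "j \<le> N" for i j
    using assms(3) that by (rule step_mono_on_ivl)
  have pos: "0 < \<gamma> i" if "i \<in> {1..N}" for i
    using mono[of 1 i] that assms(2) by auto
  have best: "phi \<gamma> v j \<le> phi \<gamma> v 1" if "v \<in> {1..N}" "j \<in> {1..N}" for v j
    using that by (intro phi_antimono pos mono) auto
  have exchange: "phi \<gamma> 1 a + phi \<gamma> a b \<le> phi \<gamma> 1 b + phi \<gamma> a 1"
    if "a \<in> {1..N}" "b \<in> {1..N}" for a b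
    using that assms(2) by (intro phi_exchange mono) auto
  have star: "min_nbr_sum (phi \<gamma>) N (star1 N) = phi \<gamma> 1 N + (\<Sum>i\<in>{2..N}. phi \<gamma> i 1)"
    using assms(1) by (intro min_nbr_sum_star1 phi_antimono pos mono) auto
  have "min_nbr_sum (phi \<gamma>) N T \<le> min_nbr_sum (phi \<gamma>) N (star1 N)" if "is_spanning_tree N T" for T
    unfolding star using assms(1) that best exchange by (intro min_nbr_sum_le_star_value) auto
  moreover have "0 \<le> 1 / (2 * (real N - 1))" using assms(1) by simp
  ultimately have optimal: "\<forall>T. is_spanning_tree N T \<longrightarrow> sum_rate \<gamma> N T \<le> sum_rate \<gamma> N (star1 N)"
    unfolding sum_rate_eq_min_nbr_sum by (blast intro: mult_left_mono)
  have "phi \<gamma> 1 N + (\<Sum>i\<in>{2..N}. phi \<gamma> i 1) =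
      log 2 ((\<gamma> 1 + \<gamma> 1 / (\<gamma> 1 + \<gamma> N)) * (\<Prod>i\<in>{2..N}. \<gamma> i + \<gamma> i / (\<gamma> i + \<gamma> 1)))"
    using pos assms(1) by (intro phi_add_sum_phi_eq_log_prod) auto
  then have "sum_rate \<gamma> N (star1 N) = 1 / (2 * (real N - 1)) *
      log 2 ((\<gamma> 1 + \<gamma> 1 / (\<gamma> 1 + \<gamma> N)) * (\<Prod>i\<in>{2..N}. \<gamma> i + \<gamma> i / (\<gamma> i + \<gamma> 1)))"
    unfolding sum_rate_eq_min_nbr_sum star by simp
  with star1_spanning_tree optimal show ?thesis by (intro conjI)
qed

end
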